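(* Let $n=2p$ with $p$ a positive integer, $m$ a positive integer, and $s$ a real number with $0\le s\le p$. Define $$g(\alpha)=2\sum_{i=1}^p\Big(2i\alpha_i+m\big(\alpha_i+1-\tfrac{s}{p}\big)^+\Big)$$ on $\mathcal{P}=\{\alpha\in\mathbb{R}^p:\ \tfrac{s}{p}\ge\alpha_1\ge\cdots\ge\alpha_p,\ \sum_{i=1}^p\alpha_i=0\}$. If $m\ge 2(\lceil s\rceil-1)$, then $\min_{\alpha\in\mathcal{P}}g(\alpha)\ge d_2(s)$, where $d_2$ is the piecewise linear function connecting the points $(s,(n-2s)(m-s))$ for $s\in\mathbb{Z}$.
   Context: $(x)^+=\max(0,x)$. *)

theory Defs
  imports Complex_Main
begin

definition pos_part :: "real \<Rightarrow> real" where
  "pos_part x = max 0 x"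

definition d2_node :: "nat \<Rightarrow> nat \<Rightarrow> int \<Rightarrow> real" where
  "d2_node n m k = (real n - 2 * real_of_int k) * (real m - real_of_int k)"

definition d2 :: "nat \<Rightarrow> nat \<Rightarrow> real \<Rightarrow> real" where
  "d2 n m s = (let k = \<lfloor>s\<rfloor> in
     d2_node n m k + (s - real_of_int k) * (d2_node n m (k + 1) - d2_node n m k))"

definition g_fun :: "nat \<Rightarrow> nat \<Rightarrow> real \<Rightarrow> (nat \<Rightarrow> real) \<Rightarrow> real" where
  "g_fun p m s \<alpha> = 2 * (\<Sum>i=1..p. 2 * real i * \<alpha> i + real m * pos_part (\<alpha> i + 1 - s / real p))"

definition P_set :: "nat \<Rightarrow> real \<Rightarrow> (nat \<Rightarrow> real) set" where
  "P_set p s = {\<alpha>. s / real p \<ge> \<alpha> 1 \<and> (\<forall>i\<in>{1..<p}. \<alpha> i \<ge> \<alpha> (i + 1))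
                   \<and> (\<Sum>i=1..p. \<alpha> i) = 0}"

end

theory Submission
  imports Defs
begin

text \<open>Write a = s/p, S k = \<alpha> 1 + ... + \<alpha> k and let M = \<Sum>i. pos_part (\<alpha> i + 1 - a) be the
  excess. Since S p = 0, Abel summation gives \<Sum>i. i \<alpha> i = - \<Sum>k<p. S k, and every partial
  sum satisfies S k \<le> k a (the \<alpha> i decrease from \<alpha> 1 \<le> a) and S k \<le> M - k (1 - a). Hence
  g \<alpha> \<ge> 2 (m M - s (p - 1) + 2 \<Sum>k<p. pos_part (k - M)), a function of M \<ge> p - s alone. Its
  slope is at least m - 2 card {k < p. k > p - s} \<ge> m - 2 (\<lceil>s\<rceil> - 1) \<ge> 0, so it is minimal
  at M = p - s, where it equals d2 s.\<close>

lemma sum_of_nat_mult_eq_partial_sums: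
  fixes a :: "nat \<Rightarrow> 'a::comm_ring_1"
  shows "(\<Sum>i=1..N. of_nat i * a i) = of_nat N * (\<Sum>i=1..N. a i) - (\<Sum>k=1..<N. \<Sum>i=1..k. a i)"
proof (induction N)
  case 0 then show ?case by simp
next
  case (Suc N)
  have "(\<Sum>k=1..<Suc N. \<Sum>i=1..k. a i) = (\<Sum>k=1..<N. \<Sum>i=1..k. a i) + (\<Sum>i=1..N. a i)"
    by (cases N) (simp_all add: sum.atLeastLessThan_Suc)
  with Suc show ?case by (simp add: algebra_simps)
qed

lemma double_sum_atLeastLessThan_of_nat:
  "2 * (\<Sum>k=1..<q. real k) = real q * (real q - 1)"
proof (cases q)
  case (Suc r)
  then have "{1..<q} = {Suc 0..r}" by auto
  with Suc show ?thesis
    using double_gauss_sum_from_Suc_0[of r, where 'a = real] by (simp add: algebra_simps)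
qed simp

lemma card_indices_above_le:
  fixes s :: real
  shows "card {k\<in>{1..<p}. real p - s < real k} \<le> nat \<lceil>s\<rceil> - 1"
proof -
  define c where "c = nat \<lceil>s\<rceil>"
  have "{k\<in>{1..<p}. real p - s < real k} \<subseteq> {p + 1 - c..<p}"
  proof
    fix k assume k: "k \<in> {k\<in>{1..<p}. real p - s < real k}"
    have "s \<le> real c" by (simp add: c_def) linarith
    with k have "p < k + c" by auto
    with k show "k \<in> {p + 1 - c..<p}" by auto
  qed
  then have "card {k\<in>{1..<p}. real p - s < real k} \<le> card {p + 1 - c..<p}"
    by (rule card_mono[rotated]) simp
  then show ?thesis by (simp add: c_def)
qed

lemma mult_add_sum_pos_part_mono:
  fixes f :: "'a \<Rightarrow> real"
  assumes "finite K" "c \<le> d" "2 * real (card {k\<in>K. c < f k}) \<le> m"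
  shows "m * c + 2 * (\<Sum>k\<in>K. pos_part (f k - c)) \<le> m * d + 2 * (\<Sum>k\<in>K. pos_part (f k - d))"
proof -
  \<comment> \<open>On [c, d] each ramp decreases with slope at most 1, and only if c < f k.\<close>
  have "(\<Sum>k\<in>K. pos_part (f k - c) - (d - c) * (if c < f k then 1 else 0))
      \<le> (\<Sum>k\<in>K. pos_part (f k - d))"
    by (rule sum_mono) (use assms(2) in \<open>auto simp: pos_part_def\<close>)
  then have "(\<Sum>k\<in>K. pos_part (f k - c)) - (\<Sum>k\<in>K. (d - c) * (if c < f k then 1 else 0))
      \<le> (\<Sum>k\<in>K. pos_part (f k - d))"
    by (simp only: sum_subtractf)
  moreover have "(\<Sum>k\<in>K. (d - c) * (if c < f k then 1 else 0)) = (d - c) * card {k\<in>K. c < f k}"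
    using assms(1) by (simp add: sum_distrib_left[symmetric] sum.If_cases Int_def conj_commute)
  moreover have "(d - c) * (2 * card {k\<in>K. c < f k}) \<le> (d - c) * m"
    using assms(2,3) by (intro mult_left_mono) auto
  ultimately show ?thesis by (simp add: algebra_simps)
qed

lemma sum_le_sum_pos_part:
  fixes f :: "nat \<Rightarrow> real"
  assumes "k \<le> p"
  shows "(\<Sum>i=1..k. f i) \<le> (\<Sum>i=1..p. pos_part (f i))"
proof -
  have "(\<Sum>i=1..k. f i) \<le> (\<Sum>i=1..k. pos_part (f i))"
    by (rule sum_mono) (simp add: pos_part_def)
  also have "\<dots> \<le> (\<Sum>i=1..p. pos_part (f i))"
    by (rule sum_mono2) (use assms in \<open>auto simp: pos_part_def\<close>)
  finally show ?thesis .
qed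

lemma sum_pos_part_ramp:
  fixes x :: real
  assumes "0 \<le> x" "x \<le> real q"
  shows "2 * (\<Sum>k=1..<q. pos_part (real k - (real q - x)))
       = of_int \<lfloor>x\<rfloor> * (of_int \<lfloor>x\<rfloor> - 1) + 2 * of_int \<lfloor>x\<rfloor> * (x - of_int \<lfloor>x\<rfloor>)"
  using assms
proof (induction q arbitrary: x)
  case 0 then show ?case by simp
next
  case (Suc q)
  have split: "(\<Sum>k=1..<Suc q. pos_part (real k - (real (Suc q) - x)))
     = (\<Sum>k=1..<q. pos_part (real k - (real q - (x - 1)))) + pos_part (x - 1)"
    using Suc.prems by (cases q) (auto simp: sum.atLeastLessThan_Suc pos_part_def algebra_simps)
  show ?case
  proof (cases "x \<ge> 1")
    case True
    have "\<lfloor>x - 1\<rfloor> = \<lfloor>x\<rfloor> - 1" by (simp add: floor_diff_one)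
    with True Suc.IH[of "x - 1"] Suc.prems show ?thesis
      unfolding split by (simp add: pos_part_def algebra_simps)
  next
    case False
    then have "(\<Sum>k=1..<q. pos_part (real k - (real q - (x - 1)))) = 0"
      by (intro sum.neutral) (auto simp: pos_part_def)
    moreover have "\<lfloor>x\<rfloor> = 0" using False Suc.prems by (simp add: floor_eq_iff)
    ultimately show ?thesis using False unfolding split by (simp add: pos_part_def)
  qed
qed

lemma d2_double_eq_sum_pos_part:
  assumes "0 \<le> s" "s \<le> real p"
  shows "d2 (2 * p) m s = 2 * (real m * (real p - s) - s * (real p - 1)
           + 2 * (\<Sum>k=1..<p. pos_part (real k - (real p - s))))"
  using sum_pos_part_ramp[OF assms]
  by (simp add: d2_def d2_node_def Let_def algebra_simps)

lemma P_set_le_first: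
  assumes "\<alpha> \<in> P_set p s" "1 \<le> i" "i \<le> p"
  shows "\<alpha> i \<le> s / real p"
  using assms(2,3)
proof (induction i rule: dec_induct)
  case base then show ?case using assms(1) by (simp add: P_set_def)
next
  case (step i)
  then have "\<alpha> (Suc i) \<le> \<alpha> i" using assms(1) by (simp add: P_set_def)
  with step show ?case by simp
qed

lemma P_set_partial_sum_le:
  assumes "\<alpha> \<in> P_set p s" "k \<le> p"
  shows "(\<Sum>i=1..k. \<alpha> i) \<le> real k * (s / real p)"
proof -
  have "(\<Sum>i=1..k. \<alpha> i) \<le> (\<Sum>i=1..k. s / real p)"
    by (rule sum_mono) (use P_set_le_first[OF assms(1)] assms(2) in auto)
  then show ?thesis by simp
qed

lemma P_set_sum_pos_part_ge:
  assumes "p > 0" "\<alpha> \<in> P_set p s"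
  shows "real p - s \<le> (\<Sum>i=1..p. pos_part (\<alpha> i + 1 - s / real p))"
proof -
  have "(\<Sum>i=1..p. \<alpha> i + 1 - s / real p) = real p - s"
    using assms by (simp add: P_set_def sum.distrib sum_subtractf)
  with sum_le_sum_pos_part[of p p "\<lambda>i. \<alpha> i + 1 - s / real p"] show ?thesis by simp
qed

lemma g_fun_ge:
  assumes "p > 0" "\<alpha> \<in> P_set p s"
  defines "M \<equiv> \<Sum>i=1..p. pos_part (\<alpha> i + 1 - s / real p)"
  shows "2 * (real m * M - s * (real p - 1) + 2 * (\<Sum>k=1..<p. pos_part (real k - M)))
           \<le> g_fun p m s \<alpha>"
proof -
  define a where "a = s / real p"
  define S where "S k = (\<Sum>i=1..k. \<alpha> i)" for k
  have g: "g_fun p m s \<alpha> = 2 * (2 * (\<Sum>i=1..p. real i * \<alpha> i) + real m * M)"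
    by (simp add: g_fun_def M_def sum.distrib sum_distrib_left mult.assoc)
  have "(\<Sum>i=1..p. real i * \<alpha> i) = - (\<Sum>k=1..<p. S k)"
    using sum_of_nat_mult_eq_partial_sums[of \<alpha> p] assms(2) by (simp add: S_def P_set_def)
  moreover have "S k \<le> real k * a - pos_part (real k - M)" if "k \<le> p" for k
  proof -
    have "(\<Sum>i=1..k. \<alpha> i + 1 - a) = S k + real k * (1 - a)"
      by (simp add: S_def sum_subtractf sum.distrib algebra_simps)
    then have "S k + real k * (1 - a) \<le> M"
      using sum_le_sum_pos_part[OF that, of "\<lambda>i. \<alpha> i + 1 - a"] by (simp add: M_def a_def)
    with P_set_partial_sum_le[OF assms(2) that] show ?thesis
      by (auto simp: S_def a_def pos_part_def algebra_simps)
  qed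
  then have "(\<Sum>k=1..<p. S k) \<le> (\<Sum>k=1..<p. real k * a - pos_part (real k - M))"
    by (intro sum_mono) auto
  moreover have "2 * (\<Sum>k=1..<p. real k * a) = a * (2 * (\<Sum>k=1..<p. real k))"
    by (simp add: sum_distrib_left algebra_simps)
  then have "2 * (\<Sum>k=1..<p. real k * a) = s * (real p - 1)"
    using double_sum_atLeastLessThan_of_nat[of p] assms(1) by (simp add: a_def)
  ultimately show ?thesis unfolding g by (simp add: sum_subtractf)
qed

theorem mainTheorem6:
  fixes p m n :: nat and s :: real
  assumes "p > 0" and "m > 0" and "n = 2 * p"
    and "0 \<le> s" and "s \<le> real p"
    and "real m \<ge> 2 * (real_of_int \<lceil>s\<rceil> - 1)"
  shows "\<forall>\<alpha>\<in>P_set p s. g_fun p m s \<alpha> \<ge> d2 n m s"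
proof
  fix \<alpha> assume \<alpha>: "\<alpha> \<in> P_set p s"
  define M where "M = (\<Sum>i=1..p. pos_part (\<alpha> i + 1 - s / real p))"
  have "real (card {k\<in>{1..<p}. real p - s < real k}) \<le> real (nat \<lceil>s\<rceil> - 1)"
    using card_indices_above_le[of p s] by linarith
  also have "\<dots> \<le> real m / 2"
    using assms(2,6) by (cases "\<lceil>s\<rceil> \<ge> 1") (auto simp: of_nat_diff)
  finally have "2 * real (card {k\<in>{1..<p}. real p - s < real k}) \<le> real m" by simp
  then have "real m * (real p - s) + 2 * (\<Sum>k=1..<p. pos_part (real k - (real p - s)))
      \<le> real m * M + 2 * (\<Sum>k=1..<p. pos_part (real k - M))"
    using P_set_sum_pos_part_ge[OF assms(1) \<alpha>] unfolding M_def
    by (intro mult_add_sum_pos_part_mono) auto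
  then have "d2 n m s \<le> 2 * (real m * M - s * (real p - 1) + 2 * (\<Sum>k=1..<p. pos_part (real k - M)))"
    using d2_double_eq_sum_pos_part[OF assms(4,5), of m] assms(3) by simp
  also have "\<dots> \<le> g_fun p m s \<alpha>"
    using g_fun_ge[OF assms(1) \<alpha>] unfolding M_def .
  finally show "g_fun p m s \<alpha> \<ge> d2 n m s" .
qed

end
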